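(* Let $S$ be a set and $s:I_m\to S$ a non-constant sequence. Let $A=s(1)$, let $m_1\ge 1$ be maximal with $s(1)=\cdots=s(m_1)=A$, let $m_2\ge 0$ be maximal with $s(m)=s(m-1)=\cdots=s(m-m_2+1)=A$, and put $m'=m_1+m_2$ (so $m'<m$). If $\sigma\in\mathscr{T}_m$ satisfies $$\{\sigma^{-1}(m),\sigma^{-1}(m-1),\ldots,\sigma^{-1}(m-m'+1)\}=\{1,2,\ldots,m_1\}\cup\{m,m-1,\ldots,m-m_2+1\},$$ then there exists $\tau\in\mathscr{T}_{m-m'}\circ\tau_{m-m_2}$ such that $\sigma s=\tau s$.
   Context: $\mathcal{S}_m$ is the group of bijections of $I_m=\{1,\ldots,m\}$, with $\sigma\circ\tau$ meaning apply $\tau$ first. $\mathscr{T}_m=\{\sigma\in\mathcal{S}_m \mid \exists t\in I_m:\ \sigma(1)>\sigma(2)>\cdots>\sigma(t)=1,\ \sigma(t)<\sigma(t+1)<\cdots<\sigma(m)\}$; for $k\le m$, $\mathscr{T}_k$ is identified with the permutations in $\mathcal{S}_m$ fixing all symbols $>k$ whose restriction to $I_k$ lies in $\mathscr{T}_k$. For $i\in I_m$, $\tau_i(j)=i+1-j$ for $j\le i$ and $\tau_i(j)=j$ for $j>i$. $\mathscr{T}_{k}\circ\tau_{i}=\{\rho\circ\tau_i\mid\rho\in\mathscr{T}_k\}$. $\mathcal{S}_m$ acts on sequences $s:I_m\to S$ by $\sigma s=s\circ\sigma^{-1}$. *)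

theory Defs
  imports "HOL-Combinatorics.Permutations"
begin

text \<open>Permutations of I_m = {1..m} are functions nat => nat that permute {1..m}
  (hence fix every other natural number). Composition is the usual function
  composition (apply the right factor first).\<close>

text \<open>The set T_k, viewed inside S_m: permutations fixing every symbol outside
  {1..k} whose restriction is a "valley" permutation.\<close>
definition Tperm :: "nat \<Rightarrow> (nat \<Rightarrow> nat) set" where
  "Tperm k = {\<sigma>. \<sigma> permutes {1..k} \<and>
     (\<exists>t\<in>{1..k}. (\<forall>i j. 1 \<le> i \<and> i < j \<and> j \<le> t \<longrightarrow> \<sigma> j < \<sigma> i)
                 \<and> \<sigma> t = 1
                 \<and> (\<forall>i j. t \<le> i \<and> i < j \<and> j \<le> k \<longrightarrow> \<sigma> i < \<sigma> j))}"

definition tau :: "nat \<Rightarrow> nat \<Rightarrow> nat" where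
  "tau i j = (if 1 \<le> j \<and> j \<le> i then i + 1 - j else j)"

definition Tcomp :: "nat \<Rightarrow> nat \<Rightarrow> (nat \<Rightarrow> nat) set" where
  "Tcomp k i = (\<lambda>\<rho>. \<rho> \<circ> tau i) ` Tperm k"

definition act :: "(nat \<Rightarrow> nat) \<Rightarrow> (nat \<Rightarrow> 'a) \<Rightarrow> (nat \<Rightarrow> 'a)" where
  "act \<sigma> s = s \<circ> inv \<sigma>"

end

theory Submission
  imports Defs
begin

text \<open>Let \<open>E = {1..m1} \<union> {m-m2+1..m}\<close>, on which \<open>s\<close> is constantly \<open>s 1\<close>, and let
  \<open>M = {m1+1..m-m2}\<close> be the middle block. The hypothesis on \<open>\<sigma>\<close> says that \<open>\<sigma>\<close> maps
  \<open>M\<close> onto \<open>{1..n}\<close>, \<open>n = m - (m1+m2)\<close>. Reading \<open>\<sigma>\<close> on \<open>M\<close> backwards gives a valley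
  permutation \<open>\<rho>\<close> of \<open>{1..n}\<close> (the decreasing and increasing runs swap roles), and
  \<open>\<rho> \<circ> tau (m-m2)\<close> agrees with \<open>\<sigma>\<close> on \<open>M\<close>. Two permutations that agree off a set on
  which \<open>s\<close> is constant move \<open>s\<close> in the same way.\<close>

lemma tau_permutes: "tau k permutes {1..k}"
proof (rule bij_imp_permutes)
  show "bij_betw (tau k) {1..k} {1..k}"
    by (rule bij_betw_byWitness[where f'="tau k"]) (auto simp: tau_def)
qed (auto simp: tau_def)

lemma Tperm_permutes: "\<sigma> \<in> Tperm k \<Longrightarrow> \<sigma> permutes {1..k}"
  unfolding Tperm_def by (drule CollectD) (rule conjunct1)

lemma act_eq_if_agree_off_constant:
  assumes \<sigma>: "\<sigma> permutes A" and \<tau>: "\<tau> permutes A"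
    and agree: "\<forall>x\<in>B. \<sigma> x = \<tau> x" and const: "\<forall>x\<in>A - B. s x = c"
  shows "act \<sigma> s i = act \<tau> s i"
proof -
  have inv_eq: "inv \<pi>' i = inv \<pi> i"
    if "\<pi> permutes A" "\<pi>' permutes A" "inv \<pi> i \<in> B" "\<forall>x\<in>B. \<pi> x = \<pi>' x" for \<pi> \<pi>'
    using that permutes_inv_eq[OF that(2)] permutes_inverses(1)[OF that(1)] by metis
  consider "inv \<sigma> i \<in> B" | "inv \<tau> i \<in> B" | "inv \<sigma> i \<notin> B" "inv \<tau> i \<notin> B" by blast
  then show ?thesis
  proof cases
    case 3
    show ?thesis
    proof (cases "i \<in> A")
      case True
      then have "inv \<sigma> i \<in> A" "inv \<tau> i \<in> A"
        using permutes_in_image[OF permutes_inv[OF \<sigma>]] permutes_in_image[OF permutes_inv[OF \<tau>]]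
        by auto
      then show ?thesis using 3 const by (simp add: act_def)
    next
      case False
      then show ?thesis
        using permutes_not_in[OF permutes_inv[OF \<sigma>]] permutes_not_in[OF permutes_inv[OF \<tau>]]
        by (simp add: act_def)
    qed
  qed (use inv_eq[OF \<sigma> \<tau>] inv_eq[OF \<tau> \<sigma>] agree in \<open>auto simp: act_def\<close>)
qed

lemma permutes_image_of_inv_image_complement:
  assumes perm: "\<sigma> permutes A" and "B \<subseteq> A" and inv_image: "inv \<sigma> ` C = A - B"
  shows "\<sigma> ` B = A - C"
proof -
  have "\<sigma> ` (A - B) = C"
    using arg_cong[OF inv_image, of "image \<sigma>"]
    by (simp add: image_image permutes_inverses(1)[OF perm])
  then show ?thesis
    using image_set_diff[OF permutes_inj[OF perm], of A "A - B"] permutes_image[OF perm] \<open>B \<subseteq> A\<close>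
    by (simp add: Diff_Diff_Int Int_absorb1)
qed

lemma Tperm_block_reversal:
  assumes \<sigma>T: "\<sigma> \<in> Tperm m" and le: "a + n \<le> m" and n: "1 \<le> n"
    and block: "\<sigma> ` {a+1..a+n} = {1..n}"
  shows "(\<lambda>k. if k \<in> {1..n} then \<sigma> (tau (a+n) k) else k) \<in> Tperm n"
    (is "?\<rho> \<in> _")
proof -
  let ?L = "a + n"
  obtain t where perm: "\<sigma> permutes {1..m}" and t: "t \<in> {1..m}" and t1: "\<sigma> t = 1"
    and dec: "\<And>i j. 1 \<le> i \<Longrightarrow> i < j \<Longrightarrow> j \<le> t \<Longrightarrow> \<sigma> j < \<sigma> i"
    and inc: "\<And>i j. t \<le> i \<Longrightarrow> i < j \<Longrightarrow> j \<le> m \<Longrightarrow> \<sigma> i < \<sigma> j"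
    using \<sigma>T unfolding Tperm_def by blast
  obtain x where "x \<in> {a+1..?L}" "\<sigma> x = \<sigma> t"
    using block n t1 by (metis atLeastAtMost_iff imageE order_refl)
  then have t_block: "t \<in> {a+1..?L}"
    using injD[OF permutes_inj[OF perm]] by metis
  have tau_block: "bij_betw (tau ?L) {1..n} {a+1..?L}"
    by (rule bij_betw_byWitness[where f'="tau ?L"]) (auto simp: tau_def)
  have \<sigma>_block: "bij_betw \<sigma> {a+1..?L} {1..n}"
    unfolding bij_betw_def using block inj_on_subset[OF permutes_inj[OF perm]] by blast
  have "bij_betw (\<sigma> \<circ> tau ?L) {1..n} {1..n}"
    by (rule bij_betw_trans[OF tau_block \<sigma>_block])
  then have "bij_betw ?\<rho> {1..n} {1..n}"
    by (rule bij_betw_cong[THEN iffD1, rotated]) simp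
  then have \<rho>_perm: "?\<rho> permutes {1..n}"
    by (rule bij_imp_permutes) auto
  show ?thesis
    unfolding Tperm_def
  proof (intro CollectI conjI \<rho>_perm bexI[where x="?L + 1 - t"] allI impI)
    show "?L + 1 - t \<in> {1..n}" "?\<rho> (?L + 1 - t) = 1"
      using t_block t1 by (auto simp: tau_def)
    fix i j
    show "?\<rho> j < ?\<rho> i" if "1 \<le> i \<and> i < j \<and> j \<le> ?L + 1 - t"
    proof -
      have "i \<in> {1..n}" "j \<in> {1..n}" using that t_block by auto
      moreover have "\<sigma> (?L + 1 - j) < \<sigma> (?L + 1 - i)"
        using that t_block le by (intro inc) auto
      ultimately show ?thesis by (simp add: tau_def)
    qed
    show "?\<rho> i < ?\<rho> j" if "?L + 1 - t \<le> i \<and> i < j \<and> j \<le> n"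
    proof -
      have "i \<in> {1..n}" "j \<in> {1..n}" using that t_block by auto
      moreover have "\<sigma> (?L + 1 - i) < \<sigma> (?L + 1 - j)"
        using that t_block by (intro dec) auto
      ultimately show ?thesis by (simp add: tau_def)
    qed
  qed
qed

theorem mainTheorem12:
  fixes s :: "nat \<Rightarrow> 'a" and m m1 m2 :: nat and \<sigma> :: "nat \<Rightarrow> nat"
  assumes nonconst: "\<exists>i\<in>{1..m}. \<exists>j\<in>{1..m}. s i \<noteq> s j"
    and m1_ge: "1 \<le> m1" and m1_le: "m1 \<le> m"
    and m1_run: "\<forall>i\<in>{1..m1}. s i = s 1"
    and m1_max: "\<forall>k. k \<le> m \<and> (\<forall>i\<in>{1..k}. s i = s 1) \<longrightarrow> k \<le> m1"
    and m2_le: "m2 \<le> m"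
    and m2_run: "\<forall>i\<in>{m - m2 + 1..m}. s i = s 1"
    and m2_max: "\<forall>k. k \<le> m \<and> (\<forall>i\<in>{m - k + 1..m}. s i = s 1) \<longrightarrow> k \<le> m2"
    and sigma_T: "\<sigma> \<in> Tperm m"
    and sigma_cond: "inv \<sigma> ` {m - (m1 + m2) + 1..m} = {1..m1} \<union> {m - m2 + 1..m}"
  shows "\<exists>\<tau>\<in>Tcomp (m - (m1 + m2)) (m - m2). \<forall>i\<in>{1..m}. act \<sigma> s i = act \<tau> s i"
proof -
  define n where "n = m - (m1 + m2)"
  define L where "L = m - m2"
  have perm: "\<sigma> permutes {1..m}" using sigma_T by (rule Tperm_permutes)
  have const: "\<forall>x\<in>{1..m} - {m1+1..L}. s x = s 1"
  proof
    fix x assume "x \<in> {1..m} - {m1+1..L}"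
    then have "x \<in> {1..m1} \<or> x \<in> {m - m2 + 1..m}" by (auto simp: L_def)
    then show "s x = s 1" using m1_run m2_run by blast
  qed
  have "m1 + m2 < m"
  proof (rule ccontr)
    assume "\<not> m1 + m2 < m"
    then have "{m1+1..L} = {}" by (simp add: L_def)
    then show False using nonconst const by (metis Diff_empty)
  qed
  then have L: "L = m1 + n" "L \<le> m" "1 \<le> n" by (auto simp: L_def n_def)
  have "{1..m} - {m1+1..L} = inv \<sigma> ` {n+1..m}"
    using sigma_cond m1_le \<open>m1 + m2 < m\<close> by (auto simp: L_def n_def)
  then have block: "\<sigma> ` {m1+1..m1+n} = {1..n}"
    using permutes_image_of_inv_image_complement[OF perm, of "{m1+1..L}" "{n+1..m}"] L by auto
  define \<rho> where "\<rho> = (\<lambda>k. if k \<in> {1..n} then \<sigma> (tau (m1+n) k) else k)"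
  have \<rho>T: "\<rho> \<in> Tperm n"
    unfolding \<rho>_def using Tperm_block_reversal[OF sigma_T _ _ block] L by simp
  have "\<rho> \<circ> tau L permutes {1..m}"
  proof (rule permutes_compose)
    show "tau L permutes {1..m}" using permutes_subset[OF tau_permutes] L by simp
    show "\<rho> permutes {1..m}" using permutes_subset[OF Tperm_permutes[OF \<rho>T]] L by simp
  qed
  moreover have "\<forall>x\<in>{m1+1..L}. \<sigma> x = (\<rho> \<circ> tau L) x"
    by (auto simp: \<rho>_def tau_def L)
  ultimately have "\<forall>i. act \<sigma> s i = act (\<rho> \<circ> tau L) s i"
    using act_eq_if_agree_off_constant[OF perm _ _ const] by blast
  moreover have "\<rho> \<circ> tau L \<in> Tcomp n L" using \<rho>T by (auto simp: Tcomp_def)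
  ultimately show ?thesis unfolding n_def L_def by blast
qed

end
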